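(* In the 1-sided False Negative regime, let $\mathcal{S}=\{E_1,\dots,E_k\}$ be a collection of $k$ sets of edges, each with a fixed cyclic order, and assume at least one set in $\mathcal{S}$ contains some realized edge. Consider the procedure DISCOVER$(\mathcal{S})$: repeat rounds; in each round, for $i=1,\dots,k$, query the next edge $e$ in the cyclic order of $E_i$, and if the answer is ``Yes'' return $e$. Then DISCOVER finds and returns a realized edge using at most $2k|E_f|$ queries in expectation, where $E_f$ is the set containing the found edge.
   Context: Noisy query model: each edge is either realized or not (fixed arbitrarily in advance). An oracle answers queries ``Is edge $e$ realized?'' with ``Yes''/``No''; each query costs $1$; answers to distinct queries (including repeated queries of the same edge) are independent. In the 1-sided False Negative regime: for a non-realized edge the answer is always ``No''; for a realized edge the answer is ``No'' with a constant probability $p<1/2$ and ``Yes'' with probability $1-p$. *)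

theory Defs
  imports "HOL-Probability.Probability"
begin

text \<open>A collection S = {E_1,...,E_k} of edge sets, each with a fixed cyclic order, is a
list Es of k lists (E_i is Es ! i, 0-based). The queries of DISCOVER are numbered
t = 0,1,2,...: query t is made in round t div k, to set number t mod k, and asks the
(t div k)-th edge (cyclically) of that set.\<close>

definition query_set :: "'e list list \<Rightarrow> nat \<Rightarrow> nat" where
  "query_set Es t = t mod length Es"

definition query_edge :: "'e list list \<Rightarrow> nat \<Rightarrow> 'e" where
  "query_edge Es t =
     (let E = Es ! query_set Es t in E ! ((t div length Es) mod length E))"

text \<open>Oracle in the 1-sided false negative regime: the answer to the t-th query
(True = Yes) is independent of all other answers; for a realized edge it is Yes with
probability 1 - p, for a non-realized edge it is always No. R is the set of realized edges.\<close>

definition oracle_space :: "('e \<Rightarrow> bool) \<Rightarrow> real \<Rightarrow> 'e list list \<Rightarrow> (nat \<Rightarrow> bool) measure" where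
  "oracle_space R p Es =
     (\<Pi>\<^sub>M t\<in>UNIV. measure_pmf (bernoulli_pmf (if R (query_edge Es t) then 1 - p else 0)))"

definition discover_stop :: "(nat \<Rightarrow> bool) \<Rightarrow> nat" where
  "discover_stop \<omega> = (LEAST t. \<omega> t)"

definition discover_queries :: "(nat \<Rightarrow> bool) \<Rightarrow> ennreal" where
  "discover_queries \<omega> = (if \<exists>t. \<omega> t then of_nat (Suc (discover_stop \<omega>)) else \<infinity>)"

definition discover_edge :: "'e list list \<Rightarrow> (nat \<Rightarrow> bool) \<Rightarrow> 'e" where
  "discover_edge Es \<omega> = query_edge Es (discover_stop \<omega>)"

definition found_set_size :: "'e list list \<Rightarrow> (nat \<Rightarrow> bool) \<Rightarrow> nat" where
  "found_set_size Es \<omega> = length (Es ! query_set Es (discover_stop \<omega>))"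

end

theory Submission
  imports Defs
begin

(* Among the sets containing a realized edge pick one, E_i, of minimal length m, and a
   realized edge e in it. DISCOVER queries e at the times (j + m n) k + i, n = 0, 1, ...,
   each answered Yes independently with probability 1 - p > 1/2. So if G is the number of
   No answers before the first Yes among these queries, DISCOVER makes at most k m (G + 1)
   queries, and E[G + 1] = 1/(1 - p) < 2. Since non-realized edges are never answered Yes,
   the returned edge is realized almost surely, so its set has length at least m. *)

lemma emeasure_PiM_pmf_cylinder:
  fixes q :: "'i \<Rightarrow> 'a pmf"
  assumes "finite J"
  shows "{\<omega>. \<forall>i\<in>J. \<omega> i = b i} \<in> sets (\<Pi>\<^sub>M i\<in>UNIV. measure_pmf (q i))"
    and "emeasure (\<Pi>\<^sub>M i\<in>UNIV. measure_pmf (q i)) {\<omega>. \<forall>i\<in>J. \<omega> i = b i}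
           = (\<Prod>i\<in>J. ennreal (pmf (q i) (b i)))"
proof -
  have cylinder: "{\<omega>. \<forall>i\<in>J. \<omega> i = b i}
      = prod_emb UNIV (\<lambda>i. measure_pmf (q i)) J (\<Pi>\<^sub>E i\<in>J. {b i})"
    by (auto simp: prod_emb_def space_PiM PiE_iff)
  show "{\<omega>. \<forall>i\<in>J. \<omega> i = b i} \<in> sets (\<Pi>\<^sub>M i\<in>UNIV. measure_pmf (q i))"
    unfolding cylinder using assms by (intro sets_PiM_I) auto
  show "emeasure (\<Pi>\<^sub>M i\<in>UNIV. measure_pmf (q i)) {\<omega>. \<forall>i\<in>J. \<omega> i = b i}
      = (\<Prod>i\<in>J. ennreal (pmf (q i) (b i)))"
    unfolding cylinder using assms
    by (subst emeasure_PiM_emb) (auto intro: prob_space_measure_pmf simp: emeasure_pmf_single)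
qed

lemma prob_space_oracle_space: "prob_space (oracle_space R p Es)"
  unfolding oracle_space_def by (intro prob_space_PiM prob_space_measure_pmf)

lemma emeasure_oracle_space_cylinder:
  assumes "finite J"
  shows "{\<omega>. \<forall>t\<in>J. \<omega> t = b t} \<in> sets (oracle_space R p Es)"
    and "emeasure (oracle_space R p Es) {\<omega>. \<forall>t\<in>J. \<omega> t = b t}
           = (\<Prod>t\<in>J. ennreal (pmf (bernoulli_pmf (if R (query_edge Es t) then 1 - p else 0)) (b t)))"
  unfolding oracle_space_def
  using emeasure_PiM_pmf_cylinder[OF assms,
      where q = "\<lambda>t. bernoulli_pmf (if R (query_edge Es t) then 1 - p else 0)" and b = b]
  by auto

lemma emeasure_oracle_space_no_answers:
  fixes tt :: "nat \<Rightarrow> nat"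
  assumes "inj tt" and "\<And>n. R (query_edge Es (tt n))" and "0 \<le> p" and "p \<le> 1"
  shows "{\<omega>. \<forall>i<n. \<not> \<omega> (tt i)} \<in> sets (oracle_space R p Es)"
    and "emeasure (oracle_space R p Es) {\<omega>. \<forall>i<n. \<not> \<omega> (tt i)} = ennreal (p ^ n)"
proof -
  have cylinder: "{\<omega>. \<forall>i<n. \<not> \<omega> (tt i)} = {\<omega>. \<forall>t\<in>tt ` {..<n}. \<omega> t = False}"
    by auto
  note no_answers = emeasure_oracle_space_cylinder
    [where J = "tt ` {..<n}" and b = "\<lambda>_. False", OF finite_imageI[OF finite_lessThan]]
  show "{\<omega>. \<forall>i<n. \<not> \<omega> (tt i)} \<in> sets (oracle_space R p Es)"
    unfolding cylinder by (rule no_answers)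
  have "emeasure (oracle_space R p Es) {\<omega>. \<forall>i<n. \<not> \<omega> (tt i)}
      = (\<Prod>t\<in>tt ` {..<n}. ennreal (pmf (bernoulli_pmf (if R (query_edge Es t) then 1 - p else 0)) False))"
    unfolding cylinder by (rule no_answers)
  also have "\<dots> = (\<Prod>i<n. ennreal p)"
    using inj_on_subset[OF assms(1), of "{..<n}"] assms(2-4) by (simp add: prod.reindex)
  also have "\<dots> = ennreal (p ^ n)"
    using assms(3) by (simp add: prod_ennreal ennreal_power)
  finally show "emeasure (oracle_space R p Es) {\<omega>. \<forall>i<n. \<not> \<omega> (tt i)} = ennreal (p ^ n)" .
qed

lemma AE_oracle_space_yes_realized:
  "AE \<omega> in oracle_space R p Es. \<forall>t. \<omega> t \<longrightarrow> R (query_edge Es t)"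
proof (subst AE_all_countable, intro allI)
  fix t
  show "AE \<omega> in oracle_space R p Es. \<omega> t \<longrightarrow> R (query_edge Es t)"
  proof (cases "R (query_edge Es t)")
    case False
    have "{\<omega>. \<omega> t} \<in> null_sets (oracle_space R p Es)"
      using emeasure_oracle_space_cylinder
          [where J = "{t}" and b = "\<lambda>_. True" and R = R and p = p and Es = Es] False
      by (auto intro: null_setsI)
    then show ?thesis
      by (rule AE_I') auto
  qed simp
qed

text \<open>The number of queries among tt 0, tt 1, ... up to and including the first Yes, written as
a tail sum of indicators so that its expectation is a geometric series.\<close>

definition attempts_until_yes :: "(nat \<Rightarrow> nat) \<Rightarrow> (nat \<Rightarrow> bool) \<Rightarrow> ennreal" where
  "attempts_until_yes tt \<omega> = (\<Sum>n. indicator {\<omega>. \<forall>i<n. \<not> \<omega> (tt i)} \<omega>)"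

lemma attempts_until_yes_eq:
  "attempts_until_yes tt \<omega>
     = (if \<exists>n. \<omega> (tt n) then of_nat (Suc (LEAST n. \<omega> (tt n))) else \<infinity>)"
proof (cases "\<exists>n. \<omega> (tt n)")
  case True
  define G where "G = (LEAST n. \<omega> (tt n))"
  have yes_at_G: "\<omega> (tt G)"
    unfolding G_def using True by (rule LeastI_ex)
  have no_before_G: "\<not> \<omega> (tt i)" if "i < G" for i
    using that unfolding G_def by (rule not_less_Least)
  have "(\<forall>i<n. \<not> \<omega> (tt i)) \<longleftrightarrow> n < Suc G" for n
    using yes_at_G no_before_G by (meson less_Suc_eq_le not_le order_less_le_trans)
  then have "attempts_until_yes tt \<omega> = (\<Sum>n<Suc G. 1)"
    unfolding attempts_until_yes_def by (subst suminf_finite[of "{..<Suc G}"]) auto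
  then show ?thesis
    using True by (simp add: G_def)
next
  case False
  then have "attempts_until_yes tt \<omega> = (\<Sum>n. 1)"
    unfolding attempts_until_yes_def by (intro suminf_cong) auto
  also have "\<dots> = \<infinity>"
    using summable_iff_suminf_neq_top[of "\<lambda>_. 1 :: real"] by (simp add: summable_const_iff)
  finally show ?thesis
    using False by simp
qed

context
  fixes tt :: "nat \<Rightarrow> nat" and R :: "'e \<Rightarrow> bool" and p :: real and Es :: "'e list list"
  assumes inj: "inj tt" and realized: "\<And>n. R (query_edge Es (tt n))"
    and p: "0 \<le> p" "p < 1"
begin

lemmas emeasure_no_answers_along_tt = emeasure_oracle_space_no_answers
  [where tt = tt and R = R and Es = Es and p = p, OF inj realized p(1) less_imp_le[OF p(2)]]

lemma attempts_until_yes_measurable [measurable]: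
  "attempts_until_yes tt \<in> borel_measurable (oracle_space R p Es)"
  unfolding attempts_until_yes_def
  using emeasure_no_answers_along_tt(1) by measurable

lemma nn_integral_attempts_until_yes:
  "(\<integral>\<^sup>+\<omega>. attempts_until_yes tt \<omega> \<partial>oracle_space R p Es) = ennreal (1 / (1 - p))"
proof -
  have "(\<integral>\<^sup>+\<omega>. attempts_until_yes tt \<omega> \<partial>oracle_space R p Es) = (\<Sum>n. ennreal (p ^ n))"
    unfolding attempts_until_yes_def using emeasure_no_answers_along_tt
    by (subst nn_integral_suminf) auto
  also have "\<dots> = ennreal (1 / (1 - p))"
    using p by (intro suminf_ennreal_eq geometric_sums) auto
  finally show ?thesis .
qed

lemma AE_oracle_space_eventually_yes: "AE \<omega> in oracle_space R p Es. \<exists>n. \<omega> (tt n)"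
proof -
  have "AE \<omega> in oracle_space R p Es. attempts_until_yes tt \<omega> \<noteq> \<infinity>"
    using nn_integral_attempts_until_yes by (intro nn_integral_PInf_AE) auto
  then show ?thesis
    by eventually_elim (auto simp: attempts_until_yes_eq split: if_splits)
qed

end

definition query_time :: "'e list list \<Rightarrow> nat \<Rightarrow> nat \<Rightarrow> nat \<Rightarrow> nat" where
  "query_time Es i j n = (j + length (Es ! i) * n) * length Es + i"

context
  fixes Es :: "'e list list" and i j :: nat
  assumes i: "i < length Es" and j: "j < length (Es ! i)"
begin

lemma query_edge_query_time: "query_edge Es (query_time Es i j n) = Es ! i ! j"
proof -
  have "Es \<noteq> []"
    using i by auto
  then have "query_set Es (query_time Es i j n) = i"
    and "query_time Es i j n div length Es = j + length (Es ! i) * n"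
    using i by (simp_all add: query_set_def query_time_def del: add_mult_distrib)
  moreover have "(j + length (Es ! i) * n) mod length (Es ! i) = j"
    using j by simp
  ultimately show ?thesis
    by (simp add: query_edge_def Let_def)
qed

lemma inj_query_time: "inj (query_time Es i j)"
  using i j by (auto simp: inj_def query_time_def)

lemma Suc_query_time_le: "Suc (query_time Es i j n) \<le> length Es * length (Es ! i) * Suc n"
proof -
  have "Suc (query_time Es i j n) \<le> (Suc j + length (Es ! i) * n) * length Es"
    using i by (simp add: query_time_def)
  also have "\<dots> \<le> (length (Es ! i) + length (Es ! i) * n) * length Es"
    using j by (intro mult_le_mono1) simp
  finally show ?thesis
    by (simp add: algebra_simps)
qed

lemma discover_queries_le_attempts_until_yes:
  "discover_queries \<omega> \<le> of_nat (length Es * length (Es ! i)) * attempts_until_yes (query_time Es i j) \<omega>"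
proof (cases "\<exists>n. \<omega> (query_time Es i j n)")
  case True
  define G where "G = (LEAST n. \<omega> (query_time Es i j n))"
  have "\<omega> (query_time Es i j G)"
    unfolding G_def using True by (rule LeastI_ex)
  then have "discover_stop \<omega> \<le> query_time Es i j G"
    unfolding discover_stop_def by (rule Least_le)
  then have "Suc (discover_stop \<omega>) \<le> length Es * length (Es ! i) * Suc G"
    using Suc_query_time_le by (meson Suc_le_mono order_trans)
  moreover have "discover_queries \<omega> = of_nat (Suc (discover_stop \<omega>))"
    using \<open>\<omega> (query_time Es i j G)\<close> by (auto simp: discover_queries_def)
  ultimately have "discover_queries \<omega> \<le> of_nat (length Es * length (Es ! i) * Suc G)"
    by (simp only: of_nat_mono)
  also have "\<dots> = of_nat (length Es * length (Es ! i)) * attempts_until_yes (query_time Es i j) \<omega>"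
    using True by (simp only: attempts_until_yes_eq G_def if_True of_nat_mult)
  finally show ?thesis .
next
  case False
  have "length Es * length (Es ! i) \<noteq> 0"
    using i j by (metis mult_is_0 not_less_zero)
  with False show ?thesis
    by (simp add: attempts_until_yes_eq ennreal_mult_top)
qed

context
  fixes R :: "'e \<Rightarrow> bool" and p :: real
  assumes realized: "R (Es ! i ! j)" and p: "0 \<le> p" "p < 1"
begin

lemma realized_query_time: "R (query_edge Es (query_time Es i j n))"
  using realized by (simp add: query_edge_query_time)

lemma AE_discover_edge_realized:
  "AE \<omega> in oracle_space R p Es. (\<exists>t. \<omega> t) \<and> R (discover_edge Es \<omega>)"
  using AE_oracle_space_eventually_yes
      [where R = R and Es = Es, OF inj_query_time realized_query_time p]
    AE_oracle_space_yes_realized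
proof eventually_elim
  case (elim \<omega>)
  then have "\<exists>t. \<omega> t" by blast
  then have "\<omega> (discover_stop \<omega>)"
    unfolding discover_stop_def by (rule LeastI_ex)
  with elim \<open>\<exists>t. \<omega> t\<close> show ?case
    unfolding discover_edge_def by blast
qed

lemma nn_integral_discover_queries_le:
  "(\<integral>\<^sup>+\<omega>. discover_queries \<omega> \<partial>oracle_space R p Es)
     \<le> of_nat (length Es * length (Es ! i)) * ennreal (1 / (1 - p))"
proof -
  note attempts = inj_query_time realized_query_time p
  have "(\<integral>\<^sup>+\<omega>. discover_queries \<omega> \<partial>oracle_space R p Es)
      \<le> (\<integral>\<^sup>+\<omega>. of_nat (length Es * length (Es ! i)) * attempts_until_yes (query_time Es i j) \<omega>
           \<partial>oracle_space R p Es)"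
    by (intro nn_integral_mono discover_queries_le_attempts_until_yes)
  also have "\<dots> = of_nat (length Es * length (Es ! i)) * ennreal (1 / (1 - p))"
    using attempts_until_yes_measurable[where R = R and Es = Es, OF attempts]
    by (simp add: nn_integral_cmult nn_integral_attempts_until_yes[where R = R and Es = Es, OF attempts])
  finally show ?thesis .
qed

end

end

lemma shortest_set_with_realized_edge:
  assumes "\<exists>E\<in>set Es. \<exists>e\<in>set E. R e"
  obtains i j where "i < length Es" "j < length (Es ! i)" "R (Es ! i ! j)"
    and "\<And>E. E \<in> set Es \<Longrightarrow> \<exists>e\<in>set E. R e \<Longrightarrow> length (Es ! i) \<le> length E"
proof -
  obtain E where E: "E \<in> set Es" "\<exists>e\<in>set E. R e"
    and shortest: "\<And>E'. E' \<in> set Es \<Longrightarrow> \<exists>e\<in>set E'. R e \<Longrightarrow> length E \<le> length E'"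
    using ex_has_least_nat[where P = "\<lambda>E. E \<in> set Es \<and> (\<exists>e\<in>set E. R e)" and m = length] assms
    by blast
  from E obtain i j where "i < length Es" "Es ! i = E" "j < length E" "R (E ! j)"
    by (metis in_set_conv_nth)
  with shortest show ?thesis
    using that by blast
qed

lemma found_set_size_ge:
  assumes "\<forall>E\<in>set Es. E \<noteq> []" and "Es \<noteq> []" and "R (discover_edge Es \<omega>)"
    and "\<And>E. E \<in> set Es \<Longrightarrow> \<exists>e\<in>set E. R e \<Longrightarrow> m \<le> length E"
  shows "m \<le> found_set_size Es \<omega>"
proof -
  let ?E = "Es ! query_set Es (discover_stop \<omega>)"
  have "?E \<in> set Es"
    using assms(2) by (simp add: query_set_def)
  moreover have "discover_edge Es \<omega> \<in> set ?E"
    using assms(1,2) by (simp add: discover_edge_def query_edge_def query_set_def Let_def)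
  ultimately show ?thesis
    unfolding found_set_size_def using assms(3,4) by blast
qed

theorem lemma6:
  fixes Es :: "'e list list" and R :: "'e \<Rightarrow> bool" and p :: real
  assumes "0 \<le> p" and "p < 1/2"
    and "\<forall>E\<in>set Es. E \<noteq> [] \<and> distinct E"
    and "\<exists>E\<in>set Es. \<exists>e\<in>set E. R e"
  shows "(AE \<omega> in oracle_space R p Es. (\<exists>t. \<omega> t) \<and> R (discover_edge Es \<omega>))
     \<and> (\<integral>\<^sup>+\<omega>. discover_queries \<omega> \<partial>oracle_space R p Es)
         \<le> 2 * of_nat (length Es) * (\<integral>\<^sup>+\<omega>. of_nat (found_set_size Es \<omega>) \<partial>oracle_space R p Es)"
proof -
  let ?O = "oracle_space R p Es"
  obtain i j where ij: "i < length Es" "j < length (Es ! i)" "R (Es ! i ! j)"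
    and shortest: "\<And>E. E \<in> set Es \<Longrightarrow> \<exists>e\<in>set E. R e \<Longrightarrow> length (Es ! i) \<le> length E"
    using shortest_set_with_realized_edge[OF assms(4)] by blast
  have nonempty: "\<forall>E\<in>set Es. E \<noteq> []" "Es \<noteq> []" and p: "0 \<le> p" "p < 1"
    using assms(1-3) ij(1) by auto
  note realized_found = AE_discover_edge_realized[where R = R, OF ij p]
  then have "AE \<omega> in ?O. length (Es ! i) \<le> found_set_size Es \<omega>"
    by eventually_elim (blast intro: found_set_size_ge[OF nonempty _ shortest])
  then have "AE \<omega> in ?O. of_nat (length (Es ! i)) \<le> (of_nat (found_set_size Es \<omega>) :: ennreal)"
    by eventually_elim simp
  then have found_size: "(\<integral>\<^sup>+\<omega>. of_nat (length (Es ! i)) \<partial>?O) \<le> (\<integral>\<^sup>+\<omega>. of_nat (found_set_size Es \<omega>) \<partial>?O)"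
    by (rule nn_integral_mono_AE)
  have "1 / (1 - p) \<le> 2"
    using p assms(2) by (simp add: field_simps)
  then have expected_attempts: "ennreal (1 / (1 - p)) \<le> 2"
    by (metis ennreal_leI ennreal_numeral)
  have "(\<integral>\<^sup>+\<omega>. discover_queries \<omega> \<partial>?O) \<le> of_nat (length Es * length (Es ! i)) * ennreal (1 / (1 - p))"
    by (rule nn_integral_discover_queries_le[where R = R, OF ij p])
  also have "\<dots> \<le> of_nat (length Es * length (Es ! i)) * 2"
    using expected_attempts by (rule mult_left_mono) simp
  also have "\<dots> = 2 * of_nat (length Es) * (\<integral>\<^sup>+\<omega>. of_nat (length (Es ! i)) \<partial>?O)"
    using prob_space.emeasure_space_1[OF prob_space_oracle_space, of R p Es] by (simp add: mult_ac)
  also have "\<dots> \<le> 2 * of_nat (length Es) * (\<integral>\<^sup>+\<omega>. of_nat (found_set_size Es \<omega>) \<partial>?O)"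
    using found_size by (rule mult_left_mono) simp
  finally show ?thesis
    using realized_found by (intro conjI)
qed

end
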